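(* Let $\mathcal{H}$ be a finite-dimensional Hilbert space and let $\mathcal{A}_0$ be an observable (a Hermitian operator) on $\mathcal{H}$. Suppose the observable evolves in the Heisenberg picture according to the adjoint master equation $\frac{d\mathcal{A}_t}{dt}=\mathcal{L}_t^{\dagger}(\mathcal{A}_t)$, where $\mathcal{L}_t^{\dagger}$ is the adjoint of the Liouvillian super-operator generating the dynamics, with $\mathcal{A}_t$ differentiable in $t$. Then for every $T>0$ the time $T$ needed to generate the quantumness $Q(\mathcal{A}_0,\mathcal{A}_T)$ satisfies $$T\ \geq\ T_Q=\frac{\sqrt{Q(\mathcal{A}_0,\mathcal{A}_T)}}{2\,\langle\!\langle \lVert[\mathcal{A}_0,\mathcal{L}_t^{\dagger}(\mathcal{A}_t)]\rVert_{\rm HS}\rangle\!\rangle_T},$$ (whenever the time average in the denominator is nonzero).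
   Context: For operators $X,Y$ on $\mathcal{H}$, the quantumness is $Q(X,Y)=2\lVert[X,Y]\rVert_{\rm HS}^2$, where $[X,Y]=XY-YX$ and $\lVert O\rVert_{\rm HS}=\sqrt{\operatorname{tr}(O^{\dagger}O)}$ is the Hilbert–Schmidt norm. The Liouvillian $\mathcal{L}_t$ generates the Schrödinger-picture dynamics $\dot\rho_t=\mathcal{L}_t(\rho_t)$, and its adjoint $\mathcal{L}_t^\dagger$ is defined by $\operatorname{tr}(\mathcal{A}\,\mathcal{L}_t(\rho))=\operatorname{tr}(\mathcal{L}_t^\dagger(\mathcal{A})\rho)$ for all states $\rho$ and operators $\mathcal{A}$. For a function $X_t$, $\langle\!\langle X_t\rangle\!\rangle_T=\frac{1}{T}\int_0^T X_t\,dt$ denotes its time average over $[0,T]$. *)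

theory Defs
  imports "HOL-Analysis.Analysis"
begin

text \<open>Operators on a finite-dimensional Hilbert space C^n, represented as complex
  matrices indexed by a finite type 'n.\<close>

type_synonym 'n op = "complex^'n^'n"

definition cadj :: "'n::finite op \<Rightarrow> 'n op" where
  "cadj M = (\<chi> i j. cnj (M $ j $ i))"

definition hermitian :: "'n::finite op \<Rightarrow> bool" where
  "hermitian M \<longleftrightarrow> cadj M = M"

definition commutator :: "'n::finite op \<Rightarrow> 'n op \<Rightarrow> 'n op" where
  "commutator X Y = X ** Y - Y ** X"

definition hs_norm :: "'n::finite op \<Rightarrow> real" where
  "hs_norm M = sqrt (Re (trace (cadj M ** M)))"

definition quantumness :: "'n::finite op \<Rightarrow> 'n op \<Rightarrow> real" where
  "quantumness X Y = 2 * (hs_norm (commutator X Y))\<^sup>2"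

definition is_state :: "'n::finite op \<Rightarrow> bool" where
  "is_state \<rho> \<longleftrightarrow> hermitian \<rho> \<and> trace \<rho> = 1 \<and>
     (\<forall>v::complex^'n. 0 \<le> Re (\<Sum>i\<in>UNIV. cnj (v $ i) * (\<rho> *v v) $ i))"

definition is_adjoint_superop :: "('n::finite op \<Rightarrow> 'n op) \<Rightarrow> ('n op \<Rightarrow> 'n op) \<Rightarrow> bool" where
  "is_adjoint_superop L Ldag \<longleftrightarrow>
     (\<forall>\<rho> A. is_state \<rho> \<longrightarrow> trace (A ** L \<rho>) = trace (Ldag A ** \<rho>))"

definition time_avg :: "real \<Rightarrow> (real \<Rightarrow> real) \<Rightarrow> real" where
  "time_avg T f = integral {0..T} f / T"

end

theory Submission
  imports Defs
begin

text \<open>The commutator \<open>[A 0, A t]\<close> depends linearly on \<open>A t\<close>, so it has derivative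
  \<open>[A 0, L\<^sup>\<dagger>\<^sub>t(A t)]\<close>, and it vanishes at \<open>t = 0\<close>. The fundamental theorem of calculus
  therefore gives \<open>\<parallel>[A 0, A T]\<parallel> \<le> \<integral>\<^sub>0\<^sup>T \<parallel>[A 0, L\<^sup>\<dagger>\<^sub>t(A t)]\<parallel> dt\<close>, i.e.
  \<open>\<surd>Q \<le> \<surd>2 T \<langle>\<langle>\<parallel>[A 0, L\<^sup>\<dagger>\<^sub>t(A t)]\<parallel>\<rangle>\<rangle>\<^sub>T\<close>, which is sharper than the claim by a factor \<open>\<surd>2\<close>.\<close>

lemma hs_norm_eq_norm: "hs_norm (M::'n::finite op) = norm M"
proof -
  have "Re (trace (cadj M ** M)) = (\<Sum>i\<in>UNIV. \<Sum>k\<in>UNIV. (cmod (M $ k $ i))\<^sup>2)"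
    by (simp add: trace_def cadj_def matrix_matrix_mult_def Re_sum cmod_power2 flip: power2_eq_square)
  also have "\<dots> = (\<Sum>k\<in>UNIV. (norm (M $ k))\<^sup>2)"
    by (subst sum.swap) (simp add: norm_vec_def L2_set_def sum_nonneg)
  finally show ?thesis
    by (simp add: hs_norm_def norm_vec_def L2_set_def)
qed

lemma sqrt_quantumness: "sqrt (quantumness X Y) = sqrt 2 * norm (commutator X Y)"
  by (simp add: quantumness_def hs_norm_eq_norm real_sqrt_mult)

lemma bounded_linear_commutator: "bounded_linear (commutator (X::'n::finite op))"
proof -
  have "linear (commutator X)"
    by (rule linearI)
      (simp_all add: commutator_def vec_eq_iff matrix_matrix_mult_def algebra_simps
         sum.distrib scaleR_sum_right)
  then show ?thesis
    by (simp add: linear_conv_bounded_linear)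
qed

lemma commutator_self [simp]: "commutator X X = 0"
  by (simp add: commutator_def)

lemma norm_diff_le_integral_norm_derivative:
  fixes f :: "real \<Rightarrow> 'a::banach"
  assumes "a \<le> b"
    and "\<And>t. t \<in> {a..b} \<Longrightarrow> (f has_vector_derivative f' t) (at t within {a..b})"
    and "(\<lambda>t. norm (f' t)) integrable_on {a..b}"
  shows "norm (f b - f a) \<le> integral {a..b} (\<lambda>t. norm (f' t))"
proof -
  have ftc: "(f' has_integral f b - f a) {a..b}"
    using assms(1,2) by (rule fundamental_theorem_of_calculus)
  have "norm (integral {a..b} f') \<le> integral {a..b} (\<lambda>t. norm (f' t))"
    using has_integral_integrable[OF ftc] assms(3) by (rule integral_norm_bound_integral) simp
  then show ?thesis
    by (simp add: integral_unique[OF ftc])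
qed

theorem theorem1:
  fixes A :: "real \<Rightarrow> 'n::finite op"
    and L Ldag :: "real \<Rightarrow> 'n op \<Rightarrow> 'n op"
    and T :: real
  assumes herm0: "hermitian (A 0)"
    and adj: "\<forall>t. is_adjoint_superop (L t) (Ldag t)"
    and deriv: "\<forall>t\<ge>0. (A has_vector_derivative Ldag t (A t)) (at t within {0..})"
    and Tpos: "T > 0"
    and avg_nz: "time_avg T (\<lambda>t. hs_norm (commutator (A 0) (Ldag t (A t)))) \<noteq> 0"
  shows "T \<ge> sqrt (quantumness (A 0) (A T)) /
               (2 * time_avg T (\<lambda>t. hs_norm (commutator (A 0) (Ldag t (A t)))))"
proof -
  define I where "I = integral {0..T} (\<lambda>t. norm (commutator (A 0) (Ldag t (A t))))"
  have avg: "time_avg T (\<lambda>t. hs_norm (commutator (A 0) (Ldag t (A t)))) = I / T"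
    by (simp add: time_avg_def I_def hs_norm_eq_norm)
  \<comment> \<open>A non-integrable function has integral \<open>0\<close>, so the nonzero average forces integrability.\<close>
  have integrable: "(\<lambda>t. norm (commutator (A 0) (Ldag t (A t)))) integrable_on {0..T}"
    using avg_nz Tpos not_integrable_integral by (force simp: avg I_def)
  have commutator_deriv: "((\<lambda>t. commutator (A 0) (A t)) has_vector_derivative commutator (A 0) (Ldag t (A t)))
      (at t within {0..T})" if "t \<in> {0..T}" for t
  proof -
    have "(A has_vector_derivative Ldag t (A t)) (at t within {0..T})"
      using that deriv by (auto intro: has_vector_derivative_within_subset)
    then show ?thesis
      by (rule bounded_linear.has_vector_derivative[OF bounded_linear_commutator])
  qed
  have "norm (commutator (A 0) (A T) - commutator (A 0) (A 0)) \<le> I"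
    unfolding I_def using Tpos commutator_deriv integrable
    by (intro norm_diff_le_integral_norm_derivative) auto
  then have bound: "norm (commutator (A 0) (A T)) \<le> I"
    by simp
  have "I \<noteq> 0"
    using avg avg_nz by simp
  with bound have "I > 0"
    using norm_ge_zero[of "commutator (A 0) (A T)"] by linarith
  have "sqrt 2 * norm (commutator (A 0) (A T)) \<le> 2 * I"
    using mult_mono[OF _ bound] sqrt2_less_2 by force
  then show ?thesis
    using \<open>I > 0\<close> Tpos by (simp add: sqrt_quantumness avg field_simps)
qed

end
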